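(* Every second-order polynomial has a polynomial majorant.
   Context: Second-order polynomials are the smallest class of functions $P\colon\mathbb N^{\mathbb N}\times\mathbb N\to\mathbb N$ that contains all $(l,n)\mapsto p(n)$ for polynomials $p$ with natural-number coefficients, and is closed under pointwise sum, pointwise product, and $P\mapsto P^+$ with $P^+(l,n)=l(P(l,n))$. A polynomial tree is a finite rooted tree in which each node is labeled by a polynomial in $\mathbb N[X_0,\ldots,X_k]$, $k$ being the number of children of that node, with the children of each node linearly ordered. Recursively assign functions to nodes: a leaf labeled $t$ gets $(l,n)\mapsto t(n)$; a node labeled $t$ with children (in order) assigned $P_1,\ldots,P_k$ gets $(l,n)\mapsto t(n,l(P_1(l,n)),\ldots,l(P_k(l,n)))$. The tree is a description of $P$ if $P$ is assigned to the root. A pair $(N,p)$ with $N\in\mathbb N$ and $p\colon\mathbb N\to\mathbb N$ is a majorant of $P$ if $p(n)\ge n$ for all $n$ and there is a description $T$ of $P$ such that $N$ is the height of $T$ and for every $n\in\mathbb N$ and every node $t$ of $T$ (with $k$ children) $p(n)\ge t(n,\ldots,n)$ (all $k+1$ variables set to $n$). It is a polynomial majorant if $p$ is a polynomial. *)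

theory Defs
  imports "HOL-Computational_Algebra.Polynomial"
begin

text \<open>Multivariate polynomials with natural-number coefficients, as syntactic
  expressions in the variables X_0, X_1, ...; every element of N[X_0,...,X_k]
  is denoted by some expression whose variables are among X_0..X_k.\<close>
datatype pexp = PConst nat | PVar nat | PAdd pexp pexp | PMul pexp pexp

fun peval :: "(nat \<Rightarrow> nat) \<Rightarrow> pexp \<Rightarrow> nat" where
  "peval v (PConst c) = c"
| "peval v (PVar i) = v i"
| "peval v (PAdd a b) = peval v a + peval v b"
| "peval v (PMul a b) = peval v a * peval v b"

fun pvars :: "pexp \<Rightarrow> nat set" where
  "pvars (PConst c) = {}"
| "pvars (PVar i) = {i}"
| "pvars (PAdd a b) = pvars a \<union> pvars b"
| "pvars (PMul a b) = pvars a \<union> pvars b"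

datatype ptree = Node pexp "ptree list"

fun wf_ptree :: "ptree \<Rightarrow> bool" where
  "wf_ptree (Node t ts) = (pvars t \<subseteq> {0..length ts} \<and> (\<forall>c\<in>set ts. wf_ptree c))"

fun labels :: "ptree \<Rightarrow> pexp set" where
  "labels (Node t ts) = insert t (\<Union>c\<in>set ts. labels c)"

fun height :: "ptree \<Rightarrow> nat" where
  "height (Node t ts) = (if ts = [] then 0 else Suc (Max (set (map height ts))))"

text \<open>Valuation n, y_1, ..., y_k of the variables X_0, X_1, ..., X_k.\<close>
definition env :: "nat \<Rightarrow> nat list \<Rightarrow> nat \<Rightarrow> nat" where
  "env n ys i = (if i = 0 then n else ys ! (i - 1))"

fun tfun :: "ptree \<Rightarrow> (nat \<Rightarrow> nat) \<Rightarrow> nat \<Rightarrow> nat" where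
  "tfun (Node t ts) l n = peval (env n (map (\<lambda>c. l (tfun c l n)) ts)) t"

definition description :: "ptree \<Rightarrow> ((nat \<Rightarrow> nat) \<Rightarrow> nat \<Rightarrow> nat) \<Rightarrow> bool" where
  "description T P \<longleftrightarrow> wf_ptree T \<and> tfun T = P"

inductive_set sopoly :: "((nat \<Rightarrow> nat) \<Rightarrow> nat \<Rightarrow> nat) set" where
  poly: "(\<lambda>l n. poly (p :: nat poly) n) \<in> sopoly"
| add: "P \<in> sopoly \<Longrightarrow> Q \<in> sopoly \<Longrightarrow> (\<lambda>l n. P l n + Q l n) \<in> sopoly"
| mult: "P \<in> sopoly \<Longrightarrow> Q \<in> sopoly \<Longrightarrow> (\<lambda>l n. P l n * Q l n) \<in> sopoly"
| plus: "P \<in> sopoly \<Longrightarrow> (\<lambda>l n. l (P l n)) \<in> sopoly"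

definition majorant :: "nat \<Rightarrow> (nat \<Rightarrow> nat) \<Rightarrow> ((nat \<Rightarrow> nat) \<Rightarrow> nat \<Rightarrow> nat) \<Rightarrow> bool" where
  "majorant N p P \<longleftrightarrow> (\<forall>n. n \<le> p n) \<and>
     (\<exists>T. description T P \<and> height T = N \<and>
          (\<forall>n. \<forall>t\<in>labels T. peval (\<lambda>_. n) t \<le> p n))"

definition poly_majorant :: "nat \<Rightarrow> (nat \<Rightarrow> nat) \<Rightarrow> ((nat \<Rightarrow> nat) \<Rightarrow> nat \<Rightarrow> nat) \<Rightarrow> bool" where
  "poly_majorant N p P \<longleftrightarrow> majorant N p P \<and> (\<exists>q :: nat poly. p = poly q)"

end

theory Submission
  imports Defs
begin

text \<open>By induction on the formation of a second-order polynomial one builds a description: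
  a polynomial p is a single leaf, P^+ puts the description of P below a root labelled X_1,
  and a sum or product joins the children of the two roots into one list, renaming the
  variables of the second root label past those of the first. The labels of the resulting
  finite tree evaluated on the diagonal are polynomials in n, and their sum plus n is a
  polynomial majorant.\<close>

fun pexp_of_coeffs :: "nat list \<Rightarrow> pexp" where
  "pexp_of_coeffs [] = PConst 0"
| "pexp_of_coeffs (c # cs) = PAdd (PConst c) (PMul (PVar 0) (pexp_of_coeffs cs))"

lemma peval_pexp_of_coeffs: "peval v (pexp_of_coeffs cs) = foldr (\<lambda>a b. a + v 0 * b) cs 0"
  by (induction cs) auto

lemma pvars_pexp_of_coeffs: "pvars (pexp_of_coeffs cs) \<subseteq> {0}"
  by (induction cs) auto

lemma poly_eq_foldr_coeffs: "poly p x = foldr (\<lambda>a b. a + x * b) (coeffs p) 0"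
  by (simp add: poly_def horner_sum_foldr)

fun pshift :: "nat \<Rightarrow> pexp \<Rightarrow> pexp" where
  "pshift k (PConst c) = PConst c"
| "pshift k (PVar i) = PVar (if i = 0 then 0 else i + k)"
| "pshift k (PAdd a b) = PAdd (pshift k a) (pshift k b)"
| "pshift k (PMul a b) = PMul (pshift k a) (pshift k b)"

lemma pvars_pshift: "pvars (pshift k t) = (\<lambda>i. if i = 0 then 0 else i + k) ` pvars t"
  by (induction t) auto

lemma peval_pshift: "peval v (pshift k t) = peval (\<lambda>i. v (if i = 0 then 0 else i + k)) t"
  by (induction t) auto

lemma peval_cong: "(\<And>i. i \<in> pvars t \<Longrightarrow> v i = w i) \<Longrightarrow> peval v t = peval w t"
  by (induction t) auto

lemma peval_env_append_left:
  assumes "pvars t \<subseteq> {0..length ys}"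
  shows "peval (env n (ys @ zs)) t = peval (env n ys) t"
proof (rule peval_cong)
  fix i assume "i \<in> pvars t"
  with assms have "i \<le> length ys" by auto
  then show "env n (ys @ zs) i = env n ys i"
    by (auto simp: env_def nth_append)
qed

lemma peval_env_append_right:
  assumes "pvars t \<subseteq> {0..length zs}" "k = length ys"
  shows "peval (env n (ys @ zs)) (pshift k t) = peval (env n zs) t"
  unfolding peval_pshift \<open>k = length ys\<close>
proof (rule peval_cong)
  fix i assume "i \<in> pvars t"
  with assms have "i \<le> length zs" by auto
  then show "env n (ys @ zs) (if i = 0 then 0 else i + length ys) = env n zs i"
    by (auto simp: env_def nth_append)
qed

lemma description_merge:
  assumes P: "description (Node t ts) P" and Q: "description (Node u us) Q"
    and eval_F: "\<And>v a b. peval v (F a b) = g (peval v a) (peval v b)"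
    and pvars_F: "\<And>a b. pvars (F a b) = pvars a \<union> pvars b"
  shows "description (Node (F t (pshift (length ts) u)) (ts @ us)) (\<lambda>l n. g (P l n) (Q l n))"
proof -
  have "pvars (pshift (length ts) u) \<subseteq> {0..length ts + length us}"
    using Q unfolding description_def pvars_pshift by auto
  then show ?thesis
    using P Q unfolding description_def
    by (auto simp: fun_eq_iff eval_F pvars_F peval_env_append_left peval_env_append_right)
qed

lemma sopoly_has_description: "P \<in> sopoly \<Longrightarrow> \<exists>T. description T P"
proof (induction rule: sopoly.induct)
  case (poly p)
  have "description (Node (pexp_of_coeffs (coeffs p)) []) (\<lambda>l n. poly p n)"
    unfolding description_def using pvars_pexp_of_coeffs[of "coeffs p"]
    by (auto simp: peval_pexp_of_coeffs poly_eq_foldr_coeffs env_def fun_eq_iff)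
  then show ?case by blast
next
  case (add P Q)
  then obtain t ts u us where "description (Node t ts) P" "description (Node u us) Q"
    by (metis ptree.exhaust)
  from description_merge[OF this, where F = PAdd and g = "(+)"] show ?case by auto
next
  case (mult P Q)
  then obtain t ts u us where "description (Node t ts) P" "description (Node u us) Q"
    by (metis ptree.exhaust)
  from description_merge[OF this, where F = PMul and g = "(*)"] show ?case by auto
next
  case (plus P)
  then obtain T where "description T P" by blast
  then have "description (Node (PVar 1) [T]) (\<lambda>l n. l (P l n))"
    unfolding description_def by (auto simp: fun_eq_iff env_def)
  then show ?case by blast
qed

lemma finite_labels: "finite (labels T)"
  by (induction T) auto

lemma peval_diagonal_poly: "\<exists>q :: nat poly. (\<lambda>n. peval (\<lambda>_. n) e) = poly q"
proof (induction e)
  case (PConst c) show ?case by (intro exI[of _ "[:c:]"]) auto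
next
  case (PVar i) show ?case by (intro exI[of _ "[:0, 1:]"]) auto
next
  case (PAdd a b)
  then obtain qa qb where "(\<lambda>n. peval (\<lambda>_. n) a) = poly qa" "(\<lambda>n. peval (\<lambda>_. n) b) = poly qb"
    by blast
  then show ?case by (intro exI[of _ "qa + qb"]) (auto simp: fun_eq_iff)
next
  case (PMul a b)
  then obtain qa qb where "(\<lambda>n. peval (\<lambda>_. n) a) = poly qa" "(\<lambda>n. peval (\<lambda>_. n) b) = poly qb"
    by blast
  then show ?case by (intro exI[of _ "qa * qb"]) (auto simp: fun_eq_iff)
qed

lemma finite_polys_bounded:
  assumes "finite F" "\<And>f. f \<in> F \<Longrightarrow> \<exists>q :: nat poly. f = poly q"
  shows "\<exists>q :: nat poly. \<forall>n. n \<le> poly q n \<and> (\<forall>f\<in>F. f n \<le> poly q n)"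
  using assms
proof (induction F rule: finite_induct)
  case empty show ?case by (intro exI[of _ "[:0, 1:]"]) auto
next
  case (insert f F)
  then obtain q where "\<forall>n. n \<le> poly q n \<and> (\<forall>f\<in>F. f n \<le> poly q n)" by blast
  moreover obtain qf where "f = poly qf" using insert.prems by blast
  ultimately show ?case by (intro exI[of _ "q + qf"]) (auto intro: trans_le_add1)
qed

theorem mainTheorem4:
  assumes "P \<in> sopoly"
  shows "\<exists>N p. poly_majorant N p P"
proof -
  obtain T where T: "description T P" using sopoly_has_description[OF assms] by blast
  have "\<exists>q :: nat poly. \<forall>n. n \<le> poly q n \<and>
      (\<forall>f\<in>(\<lambda>t n. peval (\<lambda>_. n) t) ` labels T. f n \<le> poly q n)"
    using finite_labels peval_diagonal_poly by (intro finite_polys_bounded) auto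
  then obtain q :: "nat poly"
    where "\<forall>n. n \<le> poly q n \<and> (\<forall>t\<in>labels T. peval (\<lambda>_. n) t \<le> poly q n)" by auto
  with T have "poly_majorant (height T) (poly q) P"
    unfolding poly_majorant_def majorant_def by blast
  then show ?thesis by blast
qed

end
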